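(* If $S$ is a cyclotomic numerical semigroup, then $\mathrm P_S$ is selfreciprocal, i.e. $x^{\deg \mathrm P_S}\,\mathrm P_S(1/x)=\mathrm P_S(x)$.
   Context: A numerical semigroup is a submonoid $S$ of $(\mathbb N,+)$ with $\mathbb N\setminus S$ finite; its semigroup polynomial is $\mathrm P_S(x)=(1-x)\sum_{s\in S}x^s$. $S$ is cyclotomic if $\mathrm P_S$ (a monic integer polynomial) has all its complex roots in the closed unit disc. *)

theory Defs
  imports "HOL-Computational_Algebra.Polynomial" "HOL-Analysis.Analysis"
begin

definition numerical_semigroup :: "nat set \<Rightarrow> bool" where
  "numerical_semigroup S \<longleftrightarrow> 0 \<in> S \<and> (\<forall>a\<in>S. \<forall>b\<in>S. a + b \<in> S) \<and> finite (UNIV - S)"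

text \<open>Semigroup polynomial P_S(x) = (1 - x) * sum_{s in S} x^s, given by its coefficients:
  the coefficient of x^k is [k in S] - [k - 1 in S] (the second term only for k >= 1).\<close>
definition semigroup_poly :: "nat set \<Rightarrow> int poly" where
  "semigroup_poly S = Abs_poly (\<lambda>k. (if k \<in> S then 1 else 0)
       - (if k \<ge> 1 \<and> k - 1 \<in> S then 1 else 0))"

definition cyclotomic_semigroup :: "nat set \<Rightarrow> bool" where
  "cyclotomic_semigroup S \<longleftrightarrow> numerical_semigroup S \<and>
     (\<forall>z::complex. poly (map_poly of_int (semigroup_poly S)) z = 0 \<longrightarrow> cmod z \<le> 1)"

end

theory Submission
  imports Defs "HOL-Computational_Algebra.Fundamental_Theorem_Algebra"
begin

text \<open>Write \<open>p(x) = c \<Prod>(x - z\<^sub>i)\<close> over \<open>\<complex>\<close>. Then \<open>|p(0)| = |c| \<Prod>|z\<^sub>i|\<close>, so if all roots lie in the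
  closed unit disc and \<open>|p(0)| = |c|\<close>, every root lies on the unit circle. For \<open>|z| = 1\<close> one has
  \<open>1 - x z = -z (x - z\<^sup>*)\<close>, hence \<open>x\<^sup>n p(1/x) = (p(0)/c\<^sup>*) p\<^sup>*(x)\<close>, where \<open>p\<^sup>*\<close> has the conjugate
  coefficients; for real coefficients \<open>p\<^sup>* = p\<close>. The semigroup polynomial is monic with constant
  term 1: its coefficients are \<open>[k \<in> S] - [k - 1 \<in> S]\<close>, and beyond the degree they all vanish,
  which forces every integer from the degree on into \<open>S\<close>.\<close>

lemma complex_poly_split_root:
  fixes p :: "complex poly"
  assumes "degree p > 0"
  obtains z q where "p = [:-z, 1:] * q" "q \<noteq> 0" "degree p = Suc (degree q)"
proof -
  have "\<not> constant (poly p)"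
    using assms constant_degree[of p] by simp
  then obtain z where "poly p z = 0"
    using fundamental_theorem_of_algebra by blast
  then obtain q where q: "p = [:-z, 1:] * q"
    using poly_eq_0_iff_dvd dvd_def by blast
  with assms have "q \<noteq> 0"
    by auto
  then have "degree p = Suc (degree q)"
    unfolding q by (subst degree_mult_eq) auto
  with q \<open>q \<noteq> 0\<close> show ?thesis
    using that by blast
qed

lemma norm_poly_0_le_norm_lead_coeff:
  fixes p :: "complex poly"
  assumes "p \<noteq> 0" and "\<And>z. poly p z = 0 \<Longrightarrow> cmod z \<le> 1"
  shows "cmod (poly p 0) \<le> cmod (lead_coeff p)"
  using assms
proof (induction "degree p" arbitrary: p rule: less_induct)
  case less
  show ?case
  proof (cases "degree p = 0")
    case True
    then obtain c where "p = [:c:]"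
      by (metis degree_eq_zeroE)
    then show ?thesis
      by simp
  next
    case False
    then obtain z q where p: "p = [:-z, 1:] * q" and "q \<noteq> 0" "degree p = Suc (degree q)"
      using complex_poly_split_root by blast
    have "cmod z \<le> 1"
      using less.prems p by auto
    moreover have "cmod (poly q 0) \<le> cmod (lead_coeff q)"
      using less.hyps[of q] less.prems \<open>q \<noteq> 0\<close> \<open>degree p = Suc (degree q)\<close> p by auto
    ultimately have "cmod z * cmod (poly q 0) \<le> 1 * cmod (lead_coeff q)"
      by (intro mult_mono) auto
    then show ?thesis
      unfolding p lead_coeff_mult by (simp add: norm_mult)
  qed
qed

lemma norm_root_eq_1_if_norm_poly_0_eq_norm_lead_coeff:
  fixes p :: "complex poly"
  assumes "p \<noteq> 0" and roots: "\<And>z. poly p z = 0 \<Longrightarrow> cmod z \<le> 1"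
    and "cmod (poly p 0) = cmod (lead_coeff p)" and "poly p z = 0"
  shows "cmod z = 1"
proof (rule ccontr)
  assume "cmod z \<noteq> 1"
  with roots \<open>poly p z = 0\<close> have z: "cmod z < 1"
    by force
  obtain q where p: "p = [:-z, 1:] * q"
    using \<open>poly p z = 0\<close> poly_eq_0_iff_dvd dvd_def by blast
  with \<open>p \<noteq> 0\<close> have "q \<noteq> 0"
    by auto
  have "cmod (poly p 0) = cmod z * cmod (poly q 0)"
    unfolding p by (simp add: norm_mult)
  also have "\<dots> \<le> cmod z * cmod (lead_coeff q)"
    using \<open>q \<noteq> 0\<close> roots p
    by (intro mult_left_mono norm_poly_0_le_norm_lead_coeff) auto
  also have "\<dots> < cmod (lead_coeff q)"
    using z \<open>q \<noteq> 0\<close> by simp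
  also have "\<dots> = cmod (lead_coeff p)"
    unfolding p lead_coeff_mult by simp
  finally show False
    using \<open>cmod (poly p 0) = cmod (lead_coeff p)\<close> by simp
qed

lemma reciprocal_poly_if_unimodular_roots:
  fixes p :: "complex poly"
  assumes "p \<noteq> 0" and "\<And>z. poly p z = 0 \<Longrightarrow> cmod z = 1" and "x \<noteq> 0"
  shows "x ^ degree p * poly p (inverse x) = poly p 0 / cnj (lead_coeff p) * cnj (poly p (cnj x))"
  using assms
proof (induction "degree p" arbitrary: p rule: less_induct)
  case less
  show ?case
  proof (cases "degree p = 0")
    case True
    then obtain c where "p = [:c:]"
      by (metis degree_eq_zeroE)
    with less.prems show ?thesis
      by simp
  next
    case False
    then obtain z q where p: "p = [:-z, 1:] * q" and "q \<noteq> 0" and deg: "degree p = Suc (degree q)"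
      using complex_poly_split_root by blast
    have IH: "x ^ degree q * poly q (inverse x) = poly q 0 / cnj (lead_coeff q) * cnj (poly q (cnj x))"
      using less.hyps[of q] less.prems deg p \<open>q \<noteq> 0\<close> by auto
    have "cmod z = 1"
      using less.prems p by auto
    then have "z * cnj z = 1"
      using complex_norm_square[of z] by simp
    have "x ^ degree p * poly p (inverse x) = x * (inverse x - z) * (x ^ degree q * poly q (inverse x))"
      unfolding deg by (subst p) (simp add: algebra_simps)
    also have "x * (inverse x - z) = - z * (x - cnj z)"
      using \<open>z * cnj z = 1\<close> \<open>x \<noteq> 0\<close> by (simp add: field_simps)
    also note IH
    also have "- z * (x - cnj z) * (poly q 0 / cnj (lead_coeff q) * cnj (poly q (cnj x)))
        = poly p 0 / cnj (lead_coeff p) * cnj (poly p (cnj x))"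
      unfolding p lead_coeff_mult by (simp add: divide_inverse algebra_simps)
    finally show ?thesis .
  qed
qed

lemma real_poly_reciprocal_if_roots_in_unit_disc:
  fixes p :: "complex poly"
  assumes real: "\<And>n. coeff p n \<in> \<real>" and "p \<noteq> 0"
    and "\<And>z. poly p z = 0 \<Longrightarrow> cmod z \<le> 1"
    and "cmod (poly p 0) = cmod (lead_coeff p)" and "x \<noteq> 0"
  shows "x ^ degree p * poly p (inverse x) = poly p 0 / lead_coeff p * poly p x"
proof -
  have "\<And>z. poly p z = 0 \<Longrightarrow> cmod z = 1"
    using assms by (intro norm_root_eq_1_if_norm_poly_0_eq_norm_lead_coeff)
  from reciprocal_poly_if_unimodular_roots[OF \<open>p \<noteq> 0\<close> this \<open>x \<noteq> 0\<close>] show ?thesis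
    using poly_cnj_real[of p "cnj x"] real Reals_cnj_iff by simp
qed

lemma numerical_semigroup_cofinite:
  assumes "numerical_semigroup S"
  obtains N where "\<And>k. k \<ge> N \<Longrightarrow> k \<in> S"
proof -
  have "finite (UNIV - S)"
    using assms numerical_semigroup_def by blast
  then obtain N where "\<forall>k\<in>UNIV - S. k < N"
    using finite_nat_bounded[of "UNIV - S"] by auto
  then show ?thesis
    using that by (meson DiffI UNIV_I not_less)
qed

lemma coeff_semigroup_poly:
  assumes "numerical_semigroup S"
  shows "coeff (semigroup_poly S) k = (if k \<in> S then 1 else 0) - (if k \<ge> 1 \<and> k - 1 \<in> S then 1 else 0)"
proof -
  obtain N where "\<And>k. k \<ge> N \<Longrightarrow> k \<in> S"
    using assms numerical_semigroup_cofinite by blast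
  then have "\<forall>\<^sub>\<infinity> k. (if k \<in> S then 1 else 0) - (if k \<ge> 1 \<and> k - 1 \<in> S then 1 else 0) = (0::int)"
    unfolding MOST_nat by (intro exI[of _ N]) auto
  then show ?thesis
    unfolding semigroup_poly_def by (simp add: Abs_poly_inverse)
qed

lemma coeff_0_semigroup_poly:
  assumes "numerical_semigroup S"
  shows "coeff (semigroup_poly S) 0 = 1"
  using assms coeff_semigroup_poly[OF assms] numerical_semigroup_def by simp

lemma mem_if_ge_degree_semigroup_poly:
  assumes "numerical_semigroup S" and "k \<ge> degree (semigroup_poly S)"
  shows "k \<in> S"
proof (rule ccontr)
  assume "k \<notin> S"
  have "k + j \<notin> S" for j
  proof (induction j)
    case (Suc j)
    have "coeff (semigroup_poly S) (Suc (k + j)) = 0"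
      using assms(2) by (intro coeff_eq_0) simp
    with Suc show ?case
      by (simp add: coeff_semigroup_poly[OF assms(1)] split: if_splits)
  qed (use \<open>k \<notin> S\<close> in simp)
  moreover obtain N where "\<And>k. k \<ge> N \<Longrightarrow> k \<in> S"
    using assms(1) numerical_semigroup_cofinite by blast
  ultimately show False
    by (metis le_add1 le_add2)
qed

lemma lead_coeff_semigroup_poly:
  assumes "numerical_semigroup S"
  shows "lead_coeff (semigroup_poly S) = 1"
proof -
  have "semigroup_poly S \<noteq> 0"
    using coeff_0_semigroup_poly[OF assms] by auto
  then have "lead_coeff (semigroup_poly S) \<noteq> 0"
    by simp
  moreover have "degree (semigroup_poly S) \<in> S"
    using assms by (rule mem_if_ge_degree_semigroup_poly) simp
  ultimately show ?thesis
    by (auto simp: coeff_semigroup_poly[OF assms] split: if_splits)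
qed

theorem corollary2:
  fixes S :: "nat set"
  assumes "cyclotomic_semigroup S"
  shows "\<forall>x::complex. x \<noteq> 0 \<longrightarrow>
    x ^ degree (semigroup_poly S) * poly (map_poly of_int (semigroup_poly S)) (1 / x)
      = poly (map_poly of_int (semigroup_poly S)) x"
proof (intro allI impI)
  fix x :: complex
  assume "x \<noteq> 0"
  have S: "numerical_semigroup S"
    and roots: "\<And>z. poly (map_poly of_int (semigroup_poly S)) z = 0 \<Longrightarrow> cmod z \<le> 1"
    using assms cyclotomic_semigroup_def by auto
  define q :: "complex poly" where "q = map_poly of_int (semigroup_poly S)"
  have "lead_coeff q = 1" and "poly q 0 = 1"
    unfolding q_def using lead_coeff_semigroup_poly[OF S] coeff_0_semigroup_poly[OF S]
    by (simp_all add: degree_map_poly coeff_map_poly poly_0_coeff_0)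
  moreover have "\<And>n. coeff q n \<in> \<real>"
    unfolding q_def by (simp add: coeff_map_poly)
  ultimately have "x ^ degree q * poly q (inverse x) = poly q x"
    using real_poly_reciprocal_if_roots_in_unit_disc[of q x] roots[folded q_def] \<open>x \<noteq> 0\<close>
    by fastforce
  moreover have "degree q = degree (semigroup_poly S)"
    unfolding q_def by (simp add: degree_map_poly)
  ultimately show "x ^ degree (semigroup_poly S) * poly (map_poly of_int (semigroup_poly S)) (1 / x)
      = poly (map_poly of_int (semigroup_poly S)) x"
    by (simp add: q_def divide_inverse)
qed

end
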